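(* Let $n\ge 2$ and $t\ge 2$ be integers. Then there exists a constant $c>0$, depending only on $n$ and $t$, such that for every sufficiently large integer $q$ there exists a $t$-MIPPC$(n,q)$ of size at least $c\,q^{\frac{tn}{2t-1}}$; that is, $M_t(n,q)\ge c\,q^{\frac{tn}{2t-1}}$.
   Context: Let $Q$ be an alphabet with $|Q|=q$. An $(n,q)$ code is a subset $\mathcal{C}\subseteq Q^n$. For $\mathcal{S}\subseteq Q^n$ and $1\le i\le n$ let $\mathcal{S}(i)=\{\mathbf{c}(i):\mathbf{c}\in\mathcal{S}\}$, and let $\mathrm{desc}(\mathcal{S})=\mathcal{S}(1)\times\cdots\times\mathcal{S}(n)$. An $(n,q)$ code $\mathcal{C}$ is a $t$-MIPPC$(n,q)$ ($t$-identifiable parent property for multimedia fingerprinting) if for every nonempty $\mathcal{C}'\subseteq\mathcal{C}$ with $|\mathcal{C}'|\le t$ we have $\bigcap_{\mathcal{S}\in S_t(\mathcal{C}')}\mathcal{S}\neq\emptyset$, where $S_t(\mathcal{C}')=\{\mathcal{S}\subseteq\mathcal{C}: |\mathcal{S}|\le t,\ \mathrm{desc}(\mathcal{S})=\mathrm{desc}(\mathcal{C}')\}$. $M_t(n,q)$ denotes the maximum size $|\mathcal{C}|$ of a $t$-MIPPC$(n,q)$. *)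

theory Defs
  imports Complex_Main
begin

definition words :: "nat \<Rightarrow> nat \<Rightarrow> nat list set" where
  "words n q = {w. length w = n \<and> set w \<subseteq> {..<q}}"

definition coord :: "nat list set \<Rightarrow> nat \<Rightarrow> nat set" where
  "coord S i = {c ! i | c. c \<in> S}"

definition desc :: "nat \<Rightarrow> nat list set \<Rightarrow> nat list set" where
  "desc n S = {w. length w = n \<and> (\<forall>i<n. w ! i \<in> coord S i)}"

definition S_t :: "nat \<Rightarrow> nat \<Rightarrow> nat list set \<Rightarrow> nat list set \<Rightarrow> nat list set set" where
  "S_t t n C C' = {S. S \<subseteq> C \<and> card S \<le> t \<and> desc n S = desc n C'}"

definition is_MIPPC :: "nat \<Rightarrow> nat \<Rightarrow> nat \<Rightarrow> nat list set \<Rightarrow> bool" where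
  "is_MIPPC t n q C \<longleftrightarrow> C \<subseteq> words n q \<and>
     (\<forall>C'. C' \<subseteq> C \<and> C' \<noteq> {} \<and> card C' \<le> t \<longrightarrow> \<Inter> (S_t t n C C') \<noteq> {})"

end

theory Submission
  imports Defs "HOL-Library.FuncSet"
begin

text \<open>
  Take a random family of \<open>M \<approx> c q^(tn/(2t-1))\<close> words. If a coalition \<open>C'\<close> of at most \<open>t\<close>
  codewords cannot be identified, then \<open>C'\<close> together with, for each member \<open>c\<close> and coordinate
  \<open>i\<close>, another codeword in \<open>desc C'\<close> agreeing with \<open>c\<close> at \<open>i\<close>, is a set of between \<open>2\<close> and
  \<open>t + tn\<close> codewords taking at most \<open>min t (k div 2)\<close> values in every coordinate, where \<open>k\<close> is
  its size. A fixed set of \<open>k\<close> indices has this property with probability at most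
  \<open>v^(nk) q^(-n(k-v))\<close>, \<open>v = min t (k div 2)\<close>, and since \<open>t(k-1) \<le> (k-v)(2t-1)\<close> the expected
  number of such index sets is at most \<open>M/2\<close>. Deleting one index from each of them leaves at
  least \<open>M/2\<close> distinct codewords forming a \<open>t\<close>-MIPPC.
\<close>

lemma words_eq: "words n q = {xs. set xs \<subseteq> {..<q} \<and> length xs = n}"
  unfolding words_def by auto

lemma finite_words: "finite (words n q)"
  by (simp add: words_eq finite_lists_length_eq)

lemma card_words: "card (words n q) = q ^ n"
  by (simp add: words_eq card_lists_length_eq)

lemma is_MIPPC_if_unique_coordinate:
  assumes C: "C \<subseteq> words n q"
    and unique: "\<And>C'. C' \<subseteq> C \<Longrightarrow> C' \<noteq> {} \<Longrightarrow> card C' \<le> t \<Longrightarrow>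
       \<exists>c\<in>C'. \<exists>i<n. \<forall>d\<in>C. d \<in> desc n C' \<longrightarrow> d ! i = c ! i \<longrightarrow> d = c"
  shows "is_MIPPC t n q C"
  unfolding is_MIPPC_def
proof (intro conjI allI impI)
  fix C' assume C': "C' \<subseteq> C \<and> C' \<noteq> {} \<and> card C' \<le> t"
  then obtain c i where c: "c \<in> C'" "i < n"
    and only_c: "\<And>d. d \<in> C \<Longrightarrow> d \<in> desc n C' \<Longrightarrow> d ! i = c ! i \<Longrightarrow> d = c"
    using unique[of C'] C' by blast
  have in_desc: "w \<in> desc n T" if "w \<in> T" "T \<subseteq> C" for w T
    using that C unfolding desc_def coord_def words_def by auto
  have "c \<in> S" if "S \<in> S_t t n C C'" for S
  proof -
    have S: "S \<subseteq> C" "desc n S = desc n C'" using that unfolding S_t_def by auto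
    have "c ! i \<in> coord S i"
      using in_desc[of c C'] c C' S(2) unfolding desc_def by auto
    then obtain d where d: "d \<in> S" "d ! i = c ! i" unfolding coord_def by auto
    have "d \<in> desc n C'" using in_desc[OF d(1) S(1)] S(2) by simp
    with d S(1) only_c show "c \<in> S" by auto
  qed
  then show "\<Inter> (S_t t n C C') \<noteq> {}" by blast
qed (use C in simp)

lemma double_card_image_le:
  assumes "finite W" and fibres: "\<And>x. x \<in> g ` W \<Longrightarrow> 2 \<le> card {y\<in>W. g y = x}"
  shows "2 * card (g ` W) \<le> card W"
proof -
  have "card W = card (\<Union>x\<in>g ` W. {y\<in>W. g y = x})" by (rule arg_cong[where f=card]) auto
  also have "\<dots> = (\<Sum>x\<in>g ` W. card {y\<in>W. g y = x})"
    using assms(1) by (intro card_UN_disjoint) auto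
  also have "\<dots> \<ge> (\<Sum>x\<in>g ` W. 2)" by (intro sum_mono fibres)
  finally show ?thesis by simp
qed

text \<open>Stated for a family \<open>f\<close> indexed by \<open>I\<close>, so that it applies both to sets of codewords
  (\<open>f = id\<close>) and to index sets of a random word family, where two indices may carry the same word.\<close>

definition confusable :: "nat \<Rightarrow> nat \<Rightarrow> ('a \<Rightarrow> nat list) \<Rightarrow> 'a set \<Rightarrow> bool" where
  "confusable t n f I \<longleftrightarrow> 2 \<le> card I \<and> card I \<le> t + t * n \<and>
     (\<forall>j<n. card ((\<lambda>a. f a ! j) ` I) \<le> min t (card I div 2))"

lemma confusable_image_iff:
  "inj_on f I \<Longrightarrow> confusable t n id (f ` I) \<longleftrightarrow> confusable t n f I"
  by (simp add: confusable_def card_image image_image)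

lemma card_image_le_min_half:
  assumes "finite W" "C' \<subseteq> W" "card C' \<le> t" "g ` W \<subseteq> g ` C'"
    and twin: "\<And>c. c \<in> C' \<Longrightarrow> \<exists>d\<in>W. d \<noteq> c \<and> g d = g c"
  shows "card (g ` W) \<le> min t (card W div 2)"
proof -
  have "finite C'" using assms(1,2) finite_subset by blast
  have "card (g ` W) \<le> card (g ` C')" using finite_imageI[OF \<open>finite C'\<close>] assms(4) by (rule card_mono)
  also have "\<dots> \<le> t" using card_image_le[OF \<open>finite C'\<close>, of g] assms(3) by linarith
  finally have "card (g ` W) \<le> t" .
  moreover have "2 * card (g ` W) \<le> card W"
  proof (rule double_card_image_le[OF assms(1)])
    fix x assume "x \<in> g ` W"
    with assms(4) have "x \<in> g ` C'" by (rule subsetD)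
    then obtain c where "c \<in> C'" "g c = x" by blast
    moreover obtain d where "d \<in> W" "d \<noteq> c" "g d = g c" using twin[OF \<open>c \<in> C'\<close>] by blast
    ultimately have "{c, d} \<subseteq> {y\<in>W. g y = x}" "card {c, d} = 2" using assms(2) by auto
    moreover have "finite {y\<in>W. g y = x}" using assms(1) by simp
    ultimately show "2 \<le> card {y\<in>W. g y = x}" using card_mono by metis
  qed
  ultimately show ?thesis by simp
qed

lemma exists_confusable_subset:
  assumes "finite C" "0 < n" "C' \<subseteq> C" "C' \<noteq> {}" "card C' \<le> t"
    and twin: "\<forall>c\<in>C'. \<forall>i<n. \<exists>d\<in>C. d \<in> desc n C' \<and> d ! i = c ! i \<and> d \<noteq> c"
  shows "\<exists>W\<subseteq>C. confusable t n id W"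
proof -
  obtain w where w: "\<And>c i. c \<in> C' \<Longrightarrow> i < n \<Longrightarrow>
      w c i \<in> C \<and> w c i \<in> desc n C' \<and> w c i ! i = c ! i \<and> w c i \<noteq> c"
    using twin by metis
  define W where "W = C' \<union> (\<lambda>(c, i). w c i) ` (C' \<times> {..<n})"
  have "finite C'" using finite_subset[OF assms(3,1)] .
  have "C' \<subseteq> W" unfolding W_def by blast
  have "W \<subseteq> C" unfolding W_def using assms(3) w by auto
  then have "finite W" using assms(1) by (rule finite_subset)
  have "card W \<le> card C' + card ((\<lambda>(c, i). w c i) ` (C' \<times> {..<n}))"
    unfolding W_def by (rule card_Un_le)
  also have "\<dots> \<le> card C' + card C' * n"
    using card_image_le[of "C' \<times> {..<n}" "\<lambda>(c, i). w c i"] \<open>finite C'\<close>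
    by (simp add: card_cartesian_product)
  also have "\<dots> \<le> t + t * n" using assms(5) by (intro add_mono mult_right_mono) auto
  finally have size: "card W \<le> t + t * n" .
  have few_values: "card ((\<lambda>x. x ! j) ` W) \<le> min t (card W div 2)" if "j < n" for j
  proof (rule card_image_le_min_half[OF \<open>finite W\<close> \<open>C' \<subseteq> W\<close> assms(5)])
    have "x ! j \<in> (\<lambda>x. x ! j) ` C'" if "x \<in> W" for x
    proof (cases "x \<in> C'")
      case False
      with \<open>x \<in> W\<close> obtain c i where "c \<in> C'" "i < n" "x = w c i" unfolding W_def by auto
      then have "x \<in> desc n C'" using w by blast
      then show ?thesis using \<open>j < n\<close> unfolding desc_def coord_def by auto
    qed simp
    then show "(\<lambda>x. x ! j) ` W \<subseteq> (\<lambda>x. x ! j) ` C'" by blast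
    fix c assume "c \<in> C'"
    moreover have "w c j \<in> W" unfolding W_def using \<open>c \<in> C'\<close> \<open>j < n\<close>
      by (auto intro!: rev_image_eqI[of "(c, j)"])
    ultimately show "\<exists>d\<in>W. d \<noteq> c \<and> d ! j = c ! j" using w \<open>j < n\<close> by blast
  qed
  have "(\<lambda>x. x ! 0) ` W \<noteq> {}" using \<open>C' \<subseteq> W\<close> assms(4) by blast
  then have "1 \<le> card W div 2"
    using few_values[OF assms(2)] \<open>finite W\<close> by (metis card_gt_0_iff finite_imageI less_one min.bounded_iff not_le)
  with size few_values have "confusable t n id W" unfolding confusable_def by simp
  then show ?thesis using \<open>W \<subseteq> C\<close> by blast
qed

lemma is_MIPPC_if_no_confusable_subset:
  assumes "C \<subseteq> words n q" "0 < n" "\<And>W. W \<subseteq> C \<Longrightarrow> \<not> confusable t n id W"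
  shows "is_MIPPC t n q C"
proof (rule is_MIPPC_if_unique_coordinate[OF assms(1)], rule ccontr)
  fix C' assume "C' \<subseteq> C" "C' \<noteq> {}" "card C' \<le> t"
    and "\<not> (\<exists>c\<in>C'. \<exists>i<n. \<forall>d\<in>C. d \<in> desc n C' \<longrightarrow> d ! i = c ! i \<longrightarrow> d = c)"
  then show False
    using exists_confusable_subset[of C n C' t] finite_subset[OF assms(1) finite_words] assms(2,3)
    by blast
qed

definition confusable_sets :: "nat \<Rightarrow> nat \<Rightarrow> nat \<Rightarrow> (nat \<Rightarrow> nat list) \<Rightarrow> nat set set" where
  "confusable_sets t n M f = {I. I \<subseteq> {..<M} \<and> confusable t n f I}"

lemma exists_MIPPC_by_deletion:
  assumes f: "f \<in> {..<M} \<rightarrow>\<^sub>E words n q" and "0 < n" "1 \<le> t"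
  shows "\<exists>C. is_MIPPC t n q C \<and> M \<le> card C + card (confusable_sets t n M f)"
proof -
  let ?B = "confusable_sets t n M f"
  have "finite ?B" unfolding confusable_sets_def by (rule finite_subset[of _ "Pow {..<M}"]) auto
  have "\<forall>I\<in>?B. \<exists>a. a \<in> I" unfolding confusable_sets_def confusable_def
    by (metis (mono_tags) all_not_in_conv card.empty mem_Collect_eq not_numeral_le_zero)
  then obtain pick where pick: "\<And>I. I \<in> ?B \<Longrightarrow> pick I \<in> I" by metis
  define A where "A = {..<M} - pick ` ?B"
  have "M \<le> card A + card ?B"
    using diff_card_le_card_Diff[of "pick ` ?B" "{..<M}"] card_image_le[of ?B pick] \<open>finite ?B\<close>
    unfolding A_def by simp
  have no_confusable: "\<not> confusable t n f I" if "I \<subseteq> A" for I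
    using that pick[of I] unfolding A_def confusable_sets_def by blast
  have "inj_on f A"
  proof (rule inj_onI, rule ccontr)
    fix a b assume ab: "a \<in> A" "b \<in> A" "f a = f b" "a \<noteq> b"
    have "1 \<le> t * n" using \<open>0 < n\<close> \<open>1 \<le> t\<close> by simp
    then have "2 \<le> t + t * n" using \<open>1 \<le> t\<close> by linarith
    moreover have "(\<lambda>x. f x ! j) ` {a, b} = {f a ! j}" for j using ab(3) by auto
    ultimately have "confusable t n f {a, b}"
      using ab(4) \<open>1 \<le> t\<close> unfolding confusable_def by simp
    then show False using no_confusable[of "{a, b}"] ab(1,2) by blast
  qed
  have "is_MIPPC t n q (f ` A)"
  proof (rule is_MIPPC_if_no_confusable_subset[OF _ \<open>0 < n\<close>])
    show "f ` A \<subseteq> words n q" using f unfolding A_def by auto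
    fix W assume "W \<subseteq> f ` A"
    then have "W = f ` (A \<inter> f -` W)" by blast
    moreover have "inj_on f (A \<inter> f -` W)" using \<open>inj_on f A\<close> by (rule inj_on_subset) blast
    ultimately show "\<not> confusable t n id W"
      using confusable_image_iff no_confusable[of "A \<inter> f -` W"] by fastforce
  qed
  moreover have "card (f ` A) = card A" using \<open>inj_on f A\<close> by (rule card_image)
  ultimately show ?thesis using \<open>M \<le> card A + card ?B\<close> by (intro exI[of _ "f ` A"]) simp
qed

lemma card_PiE_few_values_le:
  assumes "finite I" "0 < q"
  shows "card {h \<in> I \<rightarrow>\<^sub>E {..<q}. card (h ` I) \<le> v} \<le> q ^ v * v ^ card I"
proof -
  let ?compose = "\<lambda>(\<phi>, \<psi>). restrict (\<phi> \<circ> \<psi>) I"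
  have "{h \<in> I \<rightarrow>\<^sub>E {..<q}. card (h ` I) \<le> v} \<subseteq> ?compose ` (({..<v} \<rightarrow>\<^sub>E {..<q}) \<times> (I \<rightarrow>\<^sub>E {..<v}))"
  proof
    fix h assume h: "h \<in> {h \<in> I \<rightarrow>\<^sub>E {..<q}. card (h ` I) \<le> v}"
    let ?k = "card (h ` I)"
    obtain e where e: "bij_betw e {..<?k} (h ` I)"
      using ex_bij_betw_nat_finite[of "h ` I"] finite_imageI[OF assms(1)] by (auto simp: atLeast0LessThan)
    define \<phi> where "\<phi> = restrict (\<lambda>i. if i < ?k then e i else 0) {..<v}"
    define \<psi> where "\<psi> = restrict (\<lambda>a. inv_into {..<?k} e (h a)) I"
    have \<psi>_less: "\<psi> a < ?k" if "a \<in> I" for a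
      using that e inv_into_into[of "h a" e "{..<?k}"] unfolding \<psi>_def bij_betw_def by auto
    have "e i < q" if "i < ?k" for i
    proof -
      have "e i \<in> h ` I" using e that unfolding bij_betw_def by auto
      then show ?thesis using h by auto
    qed
    then have "\<phi> \<in> {..<v} \<rightarrow>\<^sub>E {..<q}" using assms(2) unfolding \<phi>_def by auto
    moreover have "\<psi> \<in> I \<rightarrow>\<^sub>E {..<v}"
      using \<psi>_less h unfolding \<psi>_def by fastforce
    moreover have "restrict (\<phi> \<circ> \<psi>) I = h"
    proof
      fix a show "restrict (\<phi> \<circ> \<psi>) I a = h a"
      proof (cases "a \<in> I")
        case True
        have "\<psi> a < v" using \<psi>_less[OF True] h by auto
        then have "\<phi> (\<psi> a) = e (\<psi> a)" using \<psi>_less[OF True] unfolding \<phi>_def by simp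
        also have "\<dots> = h a" using True e unfolding \<psi>_def by (simp add: bij_betw_inv_into_right)
        finally show ?thesis using True by simp
      qed (use h in auto)
    qed
    ultimately show "h \<in> ?compose ` (({..<v} \<rightarrow>\<^sub>E {..<q}) \<times> (I \<rightarrow>\<^sub>E {..<v}))"
      by (intro rev_image_eqI[of "(\<phi>, \<psi>)"]) auto
  qed
  moreover have fin: "finite (({..<v} \<rightarrow>\<^sub>E {..<q}) \<times> (I \<rightarrow>\<^sub>E {..<v}))"
    using assms(1) by (simp add: finite_PiE)
  ultimately have "card {h \<in> I \<rightarrow>\<^sub>E {..<q}. card (h ` I) \<le> v}
      \<le> card (?compose ` (({..<v} \<rightarrow>\<^sub>E {..<q}) \<times> (I \<rightarrow>\<^sub>E {..<v})))"
    by (intro card_mono finite_imageI)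
  also have "\<dots> \<le> card (({..<v} \<rightarrow>\<^sub>E {..<q}) \<times> (I \<rightarrow>\<^sub>E {..<v}))"
    using fin by (rule card_image_le)
  also have "\<dots> = q ^ v * v ^ card I"
    using assms(1) by (simp add: card_cartesian_product card_PiE)
  finally show ?thesis .
qed

lemma card_PiE_restrict_le:
  assumes "A \<subseteq> B" "finite B" "finite X"
  shows "card {f \<in> B \<rightarrow>\<^sub>E X. P (restrict f A)} \<le> card {g \<in> A \<rightarrow>\<^sub>E X. P g} * card X ^ (card B - card A)"
proof -
  let ?split = "\<lambda>f. (restrict f A, restrict f (B - A))"
  have "finite A" using assms(1,2) by (rule finite_subset)
  have "inj_on ?split (B \<rightarrow>\<^sub>E X)"
  proof (rule inj_onI, rule ext)
    fix f g x assume f: "f \<in> B \<rightarrow>\<^sub>E X" and g: "g \<in> B \<rightarrow>\<^sub>E X" and eq: "?split f = ?split g"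
    then have parts: "restrict f A x = restrict g A x" "restrict f (B - A) x = restrict g (B - A) x"
      by simp_all
    show "f x = g x"
    proof (cases "x \<in> B")
      case True
      then show ?thesis using parts by (cases "x \<in> A") simp_all
    next
      case False
      then show ?thesis using PiE_arb[OF f False] PiE_arb[OF g False] by simp
    qed
  qed
  moreover have "?split ` {f \<in> B \<rightarrow>\<^sub>E X. P (restrict f A)} \<subseteq> {g \<in> A \<rightarrow>\<^sub>E X. P g} \<times> ((B - A) \<rightarrow>\<^sub>E X)"
    using assms(1) by auto
  moreover have "finite ({g \<in> A \<rightarrow>\<^sub>E X. P g} \<times> ((B - A) \<rightarrow>\<^sub>E X))"
    using \<open>finite A\<close> assms(2,3) by (simp add: finite_PiE)
  ultimately have "card {f \<in> B \<rightarrow>\<^sub>E X. P (restrict f A)} \<le> card ({g \<in> A \<rightarrow>\<^sub>E X. P g} \<times> ((B - A) \<rightarrow>\<^sub>E X))"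
    by (intro card_inj_on_le) (auto elim: inj_on_subset)
  also have "\<dots> = card {g \<in> A \<rightarrow>\<^sub>E X. P g} * card X ^ (card B - card A)"
    using assms(1,2) \<open>finite A\<close> by (simp add: card_cartesian_product card_PiE card_Diff_subset)
  finally show ?thesis .
qed

lemma card_PiE_words_few_values_le:
  assumes "finite I" "0 < q"
  shows "card {g \<in> I \<rightarrow>\<^sub>E words n q. \<forall>j<n. card ((\<lambda>a. g a ! j) ` I) \<le> v} \<le> (q ^ v * v ^ card I) ^ n"
proof -
  let ?G = "{g \<in> I \<rightarrow>\<^sub>E words n q. \<forall>j<n. card ((\<lambda>a. g a ! j) ` I) \<le> v}"
  let ?H = "{h \<in> I \<rightarrow>\<^sub>E {..<q}. card (h ` I) \<le> v}"
  let ?transpose = "\<lambda>g. \<lambda>j\<in>{..<n}. \<lambda>a\<in>I. g a ! j"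
  have "inj_on ?transpose ?G"
  proof (rule inj_onI, rule ext)
    fix g g' a assume g: "g \<in> ?G" and g': "g' \<in> ?G" and eq: "?transpose g = ?transpose g'"
    show "g a = g' a"
    proof (cases "a \<in> I")
      case True
      then have "g a ! j = g' a ! j" if "j < n" for j
        using fun_cong[OF fun_cong[OF eq, of j], of a] that by simp
      moreover have "g a \<in> words n q" "g' a \<in> words n q" using g g' True by auto
      then have "length (g a) = n" "length (g' a) = n" by (simp_all add: words_def)
      ultimately show ?thesis by (intro nth_equalityI) auto
    next
      case False
      have "g \<in> I \<rightarrow>\<^sub>E words n q" "g' \<in> I \<rightarrow>\<^sub>E words n q" using g g' by simp_all
      then show ?thesis using PiE_arb False by metis
    qed
  qed
  moreover have "?transpose ` ?G \<subseteq> {..<n} \<rightarrow>\<^sub>E ?H"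
  proof
    fix h assume "h \<in> ?transpose ` ?G"
    then obtain g where g: "g \<in> ?G" and h: "h = ?transpose g" by blast
    have "g a ! j < q" if "a \<in> I" "j < n" for a j
    proof -
      have "g a \<in> words n q" using g that(1) by auto
      moreover from this have "g a ! j \<in> set (g a)" using that(2) by (simp add: words_def)
      ultimately show ?thesis by (auto simp: words_def)
    qed
    moreover have "(\<lambda>a\<in>I. g a ! j) ` I = (\<lambda>a. g a ! j) ` I" for j by auto
    ultimately show "h \<in> {..<n} \<rightarrow>\<^sub>E ?H" using g unfolding h by auto
  qed
  moreover have "finite ({..<n} \<rightarrow>\<^sub>E ?H)" using assms(1) by (auto intro!: finite_PiE)
  ultimately have "card ?G \<le> card ({..<n} \<rightarrow>\<^sub>E ?H)" by (rule card_inj_on_le)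
  also have "\<dots> = card ?H ^ n" by (simp add: card_PiE)
  also have "\<dots> \<le> (q ^ v * v ^ card I) ^ n" using card_PiE_few_values_le[OF assms] by (rule power_mono) simp
  finally show ?thesis .
qed

lemma card_confusable_le:
  assumes "I \<subseteq> {..<M}" "0 < q"
  shows "card {f \<in> {..<M} \<rightarrow>\<^sub>E words n q. confusable t n f I}
    \<le> (q ^ min t (card I div 2) * min t (card I div 2) ^ card I) ^ n * (q ^ n) ^ (M - card I)"
proof -
  let ?v = "min t (card I div 2)"
  let ?P = "\<lambda>g. \<forall>j<n. card ((\<lambda>a. g a ! j) ` I) \<le> ?v"
  have "finite I" using assms(1) finite_subset by blast
  have "(\<lambda>a. restrict f I a ! j) ` I = (\<lambda>a. f a ! j) ` I" for f j by auto
  then have "{f \<in> {..<M} \<rightarrow>\<^sub>E words n q. confusable t n f I}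
      \<subseteq> {f \<in> {..<M} \<rightarrow>\<^sub>E words n q. ?P (restrict f I)}"
    unfolding confusable_def by auto
  then have "card {f \<in> {..<M} \<rightarrow>\<^sub>E words n q. confusable t n f I}
      \<le> card {f \<in> {..<M} \<rightarrow>\<^sub>E words n q. ?P (restrict f I)}"
    by (rule card_mono[rotated]) (auto intro!: finite_PiE finite_words)
  also have "\<dots> \<le> card {g \<in> I \<rightarrow>\<^sub>E words n q. ?P g} * card (words n q) ^ (M - card I)"
    using card_PiE_restrict_le[OF assms(1) finite_lessThan finite_words, where P = ?P] by (simp only: card_lessThan)
  also have "\<dots> \<le> (q ^ ?v * ?v ^ card I) ^ n * (q ^ n) ^ (M - card I)"
    unfolding card_words by (intro mult_right_mono card_PiE_words_few_values_le[OF \<open>finite I\<close> assms(2)]) simp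
  finally show ?thesis .
qed

lemma sum_card_confusable_sets_le:
  assumes "0 < q"
  shows "(\<Sum>f\<in>{..<M} \<rightarrow>\<^sub>E words n q. card (confusable_sets t n M f))
    \<le> (\<Sum>k=2..t + t * n. (M choose k) *
          ((q ^ min t (k div 2) * min t (k div 2) ^ k) ^ n * (q ^ n) ^ (M - k)))"
proof -
  let ?F = "{..<M} \<rightarrow>\<^sub>E words n q"
  let ?K = "t + t * n"
  let ?Fam = "{I. I \<subseteq> {..<M} \<and> 2 \<le> card I \<and> card I \<le> ?K}"
  define bound where "bound k = (q ^ min t (k div 2) * min t (k div 2) ^ k) ^ n * (q ^ n) ^ (M - k)" for k
  have "finite ?F" by (simp add: finite_PiE finite_words)
  have "finite ?Fam" by (rule finite_subset[of _ "Pow {..<M}"]) auto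
  have sets: "confusable_sets t n M f = {I \<in> ?Fam. confusable t n f I}" for f
    unfolding confusable_sets_def confusable_def by auto
  have "(\<Sum>f\<in>?F. card (confusable_sets t n M f)) = (\<Sum>I\<in>?Fam. card {f \<in> ?F. confusable t n f I})"
    unfolding sets using \<open>finite ?F\<close> \<open>finite ?Fam\<close> by (rule sum_multicount_gen) simp
  also have "\<dots> \<le> (\<Sum>I\<in>?Fam. bound (card I))"
    unfolding bound_def by (intro sum_mono card_confusable_le assms) simp
  also have "\<dots> = (\<Sum>k=2..?K. \<Sum>I\<in>{I \<in> ?Fam. card I = k}. bound (card I))"
    using \<open>finite ?Fam\<close> by (intro sum.group[symmetric]) auto
  also have "\<dots> = (\<Sum>k=2..?K. (M choose k) * bound k)"
  proof (rule sum.cong[OF refl])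
    fix k assume "k \<in> {2..?K}"
    then have "{I \<in> ?Fam. card I = k} = {I. I \<subseteq> {..<M} \<and> card I = k}" by auto
    then show "(\<Sum>I\<in>{I \<in> ?Fam. card I = k}. bound (card I)) = (M choose k) * bound k"
      using n_subsets[of "{..<M}" k] by simp
  qed
  finally show ?thesis by (simp only: bound_def)
qed

text \<open>This inequality is what forces the exponent \<open>tn/(2t-1)\<close>.\<close>

lemma exponent_le_min_half:
  assumes "1 \<le> t"
  shows "real t * (real k - 1) \<le> (real k - real (min t (k div 2))) * (2 * real t - 1)"
proof (cases "k div 2 \<le> t")
  case True
  then have v: "real (min t (k div 2)) = real (k div 2)" "real (k div 2) \<le> real t" by simp_all
  show ?thesis
  proof (cases "even k")
    case True
    then have "k = 2 * (k div 2)" by simp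
    then have "real k = 2 * real (k div 2)" using arg_cong[of _ _ real] by fastforce
    then show ?thesis unfolding v(1) using v(2) by (simp add: algebra_simps)
  next
    case False
    then have "k = 2 * (k div 2) + 1" by presburger
    then have "real k = 2 * real (k div 2) + 1" using arg_cong[of _ _ real] by fastforce
    then show ?thesis unfolding v(1) using v(2) assms by (simp add: algebra_simps)
  qed
next
  case False
  then have "real (min t (k div 2)) = real t" "2 * real t + 2 \<le> real k" by linarith+
  moreover have "0 \<le> (real t - 1) * (real k - 2 * real t)" using calculation(2) assms by simp
  ultimately show ?thesis by (simp add: algebra_simps)
qed

lemma power_le_of_le_powr:
  fixes c :: real
  assumes "2 \<le> k" "0 < q" "1 \<le> t" "0 \<le> c" "c \<le> 1"
    and M: "real M \<le> c * real q powr (real (t * n) / real (2 * t - 1))"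
  shows "real M ^ k \<le> real M * c * real q ^ (n * (k - min t (k div 2)))"
proof -
  define a where "a = real (t * n) / real (2 * t - 1)"
  define v where "v = min t (k div 2)"
  have "0 < 2 * real t - 1" "real (2 * t - 1) = 2 * real t - 1" using assms(3) by (simp_all add: of_nat_diff)
  have "real (k - 1) * a = real n * (real t * (real k - 1)) / (2 * real t - 1)"
    using assms(1) \<open>real (2 * t - 1) = 2 * real t - 1\<close> unfolding a_def by (simp add: of_nat_diff)
  also have "\<dots> \<le> real n * ((real k - real v) * (2 * real t - 1)) / (2 * real t - 1)"
    using exponent_le_min_half[OF assms(3), of k] \<open>0 < 2 * real t - 1\<close> unfolding v_def
    by (intro divide_right_mono mult_left_mono) auto
  also have "\<dots> = real (n * (k - v))" using \<open>0 < 2 * real t - 1\<close> by (simp add: v_def of_nat_diff)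
  finally have exponent: "real (k - 1) * a \<le> real (n * (k - v))" .
  have "(real q powr a) ^ (k - 1) = real q powr (real (k - 1) * a)"
    using assms(2) by (simp add: powr_power)
  also have "\<dots> \<le> real q powr real (n * (k - v))"
    using exponent assms(2) by (intro powr_mono) auto
  also have "\<dots> = real q ^ (n * (k - v))" using assms(2) by (subst powr_realpow) auto
  finally have beta: "(real q powr a) ^ (k - 1) \<le> real q ^ (n * (k - v))" .
  have "real M ^ k = real M * real M ^ (k - 1)"
    using assms(1) by (simp flip: power_Suc)
  also have "\<dots> \<le> real M * (c * real q powr a) ^ (k - 1)"
    using M unfolding a_def by (intro mult_left_mono power_mono) auto
  also have "\<dots> = real M * (c ^ (k - 1) * (real q powr a) ^ (k - 1))"
    by (simp add: power_mult_distrib)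
  also have "\<dots> \<le> real M * (c * real q ^ (n * (k - v)))"
    using power_decreasing[of 1 "k - 1" c] assms(1,4,5)
    by (intro mult_left_mono mult_mono beta) auto
  finally show ?thesis unfolding v_def by (simp add: mult.assoc)
qed

lemma confusable_term_le:
  fixes c :: real
  assumes "2 \<le> k" "0 < q" "1 \<le> t" "0 \<le> c" "c \<le> 1"
    and M: "real M \<le> c * real q powr (real (t * n) / real (2 * t - 1))"
  shows "real ((M choose k) * ((q ^ min t (k div 2) * min t (k div 2) ^ k) ^ n * (q ^ n) ^ (M - k)))
    \<le> real M * c * real t ^ (n * k) * real q ^ (n * M)"
proof (cases "k \<le> M")
  case False
  then show ?thesis using assms(4) by (simp add: binomial_eq_0)
next
  case True
  define v where "v = min t (k div 2)"
  have "real (M choose k) \<le> real M ^ k"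
    using binomial_le_pow[OF True] by (simp flip: of_nat_power)
  also have "\<dots> \<le> real M * c * real q ^ (n * (k - v))"
    unfolding v_def by (rule power_le_of_le_powr[OF assms])
  finally have choose: "real (M choose k) \<le> real M * c * real q ^ (n * (k - v))" .
  have "real v ^ (n * k) \<le> real t ^ (n * k)" unfolding v_def by (intro power_mono) auto
  have "v \<le> k" unfolding v_def by simp
  moreover obtain s r where "k = v + s" "M = k + r" using \<open>v \<le> k\<close> True le_Suc_ex by metis
  ultimately have "n * (k - v) + (v * n + n * (M - k)) = n * M" by (simp add: algebra_simps)
  have "real ((M choose k) * ((q ^ v * v ^ k) ^ n * (q ^ n) ^ (M - k)))
      = real (M choose k) * (real v ^ (n * k) * real q ^ (v * n + n * (M - k)))"
    by (simp add: power_mult_distrib power_add flip: power_mult) (simp add: ac_simps)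
  also have "\<dots> \<le> (real M * c * real q ^ (n * (k - v))) * (real t ^ (n * k) * real q ^ (v * n + n * (M - k)))"
    using choose \<open>real v ^ (n * k) \<le> real t ^ (n * k)\<close> assms(4) by (intro mult_mono) auto
  also have "\<dots> = real M * c * real t ^ (n * k) * real q ^ (n * (k - v) + (v * n + n * (M - k)))"
    by (simp add: power_add)
  finally show ?thesis unfolding v_def \<open>n * (k - v) + (v * n + n * (M - k)) = n * M\<close>[unfolded v_def] .
qed

lemma sum_card_confusable_sets_le_half:
  fixes c :: real
  assumes "0 < q" "1 \<le> t" "0 < c"
    and c: "2 * real (t + t * n) * real t ^ (n * (t + t * n)) * c \<le> 1"
    and M: "real M \<le> c * real q powr (real (t * n) / real (2 * t - 1))"
  shows "2 * (\<Sum>f\<in>{..<M} \<rightarrow>\<^sub>E words n q. card (confusable_sets t n M f)) \<le> M * q ^ (n * M)"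
proof -
  let ?K = "t + t * n"
  let ?T = "real t ^ (n * ?K)"
  let ?term = "\<lambda>k. (M choose k) * ((q ^ min t (k div 2) * min t (k div 2) ^ k) ^ n * (q ^ n) ^ (M - k))"
  have "1 \<le> ?K" using assms(2) by simp
  then have "1 \<le> real ?K" by (metis of_nat_1 of_nat_le_iff)
  moreover have "1 \<le> ?T" using assms(2) by simp
  ultimately have "1 \<le> real ?K * ?T" using mult_mono[of 1 "real ?K" 1 ?T] by simp
  then have "1 \<le> 2 * real ?K * ?T" by (simp only: mult.assoc)
  then have "1 * c \<le> (2 * real ?K * ?T) * c" using assms(3) by (intro mult_right_mono) auto
  then have "c \<le> 1" using c by linarith
  have "real (\<Sum>f\<in>{..<M} \<rightarrow>\<^sub>E words n q. card (confusable_sets t n M f)) \<le> (\<Sum>k=2..?K. real (?term k))"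
    using sum_card_confusable_sets_le[OF assms(1), where M = M and n = n and t = t] by (simp only: of_nat_sum[symmetric] of_nat_le_iff)
  also have "\<dots> \<le> (\<Sum>k=2..?K. real M * c * ?T * real q ^ (n * M))"
  proof (rule sum_mono)
    fix k assume k: "k \<in> {2..?K}"
    have "real t ^ (n * k) \<le> ?T" using k assms(2) by (intro power_increasing) auto
    then have "real M * c * real t ^ (n * k) * real q ^ (n * M) \<le> real M * c * ?T * real q ^ (n * M)"
      using assms(3) by (intro mult_right_mono mult_left_mono) auto
    with confusable_term_le[of k q t c M n] k assms(1,2,3) \<open>c \<le> 1\<close> M
    show "real (?term k) \<le> real M * c * ?T * real q ^ (n * M)" by auto
  qed
  also have "\<dots> = real (card {2..?K}) * (real M * c * ?T * real q ^ (n * M))"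
    by (rule sum_constant)
  also have "\<dots> \<le> real ?K * (real M * c * ?T * real q ^ (n * M))"
  proof (rule mult_right_mono)
    show "real (card {2..?K}) \<le> real ?K" by (simp only: of_nat_le_iff) simp
  qed (use assms(3) in simp)
  also have "\<dots> = real M * real q ^ (n * M) * (2 * real ?K * ?T * c) / 2"
    by (simp add: algebra_simps)
  also have "\<dots> \<le> real M * real q ^ (n * M) / 2"
    using c by (intro divide_right_mono mult_left_le) auto
  finally have "real (2 * (\<Sum>f\<in>{..<M} \<rightarrow>\<^sub>E words n q. card (confusable_sets t n M f))) \<le> real (M * q ^ (n * M))"
    by simp
  then show ?thesis by (simp only: of_nat_le_iff)
qed

lemma exists_few_confusable_sets:
  fixes c :: real
  assumes "0 < q" "1 \<le> t" "0 < c"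
    and "2 * real (t + t * n) * real t ^ (n * (t + t * n)) * c \<le> 1"
    and "real M \<le> c * real q powr (real (t * n) / real (2 * t - 1))"
  shows "\<exists>f \<in> {..<M} \<rightarrow>\<^sub>E words n q. 2 * card (confusable_sets t n M f) \<le> M"
proof -
  let ?F = "{..<M} \<rightarrow>\<^sub>E words n q"
  have "finite ?F" by (simp add: finite_PiE finite_words)
  have card_F: "card ?F = q ^ (n * M)" by (simp add: card_PiE card_words power_mult)
  then have "?F \<noteq> {}" using assms(1) by auto
  then obtain f where "f \<in> ?F"
    and f_min: "Min ((\<lambda>g. card (confusable_sets t n M g)) ` ?F) = card (confusable_sets t n M f)"
    using obtains_MIN[OF \<open>finite ?F\<close>] by metis
  have "card ?F * (2 * card (confusable_sets t n M f)) \<le> 2 * (\<Sum>g\<in>?F. card (confusable_sets t n M g))"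
    using card_Min_le_sum[OF \<open>finite ?F\<close>, of "\<lambda>g. card (confusable_sets t n M g)"]
    unfolding f_min by simp
  also have "\<dots> \<le> card ?F * M"
    using sum_card_confusable_sets_le_half[OF assms] unfolding card_F by (simp add: mult.commute)
  finally have "2 * card (confusable_sets t n M f) \<le> M"
    using card_F assms(1) by simp
  with \<open>f \<in> ?F\<close> show ?thesis by blast
qed

lemma exists_large_MIPPC:
  fixes c :: real
  assumes "0 < n" "1 \<le> t" "0 < c"
    and c: "2 * real (t + t * n) * real t ^ (n * (t + t * n)) * c \<le> 1"
    and large: "2 \<le> c * real q powr (real (t * n) / real (2 * t - 1))"
  shows "\<exists>C. is_MIPPC t n q C \<and> c / 4 * real q powr (real (t * n) / real (2 * t - 1)) \<le> real (card C)"
proof -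
  let ?\<beta> = "real q powr (real (t * n) / real (2 * t - 1))"
  have "0 < q" using large by (cases "q = 0") auto
  define M where "M = nat \<lfloor>c * ?\<beta>\<rfloor>"
  have "real M \<le> c * ?\<beta>" "c * ?\<beta> - 1 \<le> real M" unfolding M_def using large by linarith+
  then obtain f where f: "f \<in> {..<M} \<rightarrow>\<^sub>E words n q" "2 * card (confusable_sets t n M f) \<le> M"
    using exists_few_confusable_sets[OF \<open>0 < q\<close> assms(2,3) c] by blast
  moreover obtain C where "is_MIPPC t n q C" "M \<le> card C + card (confusable_sets t n M f)"
    using exists_MIPPC_by_deletion[OF f(1) assms(1,2)] by blast
  ultimately have "M \<le> 2 * card C" by linarith
  then have "real M \<le> 2 * real (card C)" by (metis of_nat_le_iff of_nat_mult of_nat_numeral)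
  with \<open>c * ?\<beta> - 1 \<le> real M\<close> large have "c / 4 * ?\<beta> \<le> real (card C)" by linarith
  with \<open>is_MIPPC t n q C\<close> show ?thesis by blast
qed

theorem theorem5:
  fixes n t :: nat
  assumes "n \<ge> 2" and "t \<ge> 2"
  shows "\<exists>c::real. c > 0 \<and> (\<exists>Q0::nat. \<forall>q\<ge>Q0. \<exists>C. is_MIPPC t n q C \<and>
           real (card C) \<ge> c * real q powr (real (t * n) / real (2 * t - 1)))"
proof -
  define K where "K = t + t * n"
  define c where "c = 1 / (2 * real K * real t ^ (n * K))"
  have "0 < K" unfolding K_def using assms by simp
  then have "0 < 2 * real K * real t ^ (n * K)" using assms by simp
  then have "0 < c" and c: "2 * real K * real t ^ (n * K) * c \<le> 1" unfolding c_def by simp_all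
  have "2 * t - 1 \<le> t * n" using mult_le_mono2[OF assms(1), of t] by linarith
  then have "real (2 * t - 1) \<le> real (t * n)" by (simp only: of_nat_le_iff)
  then have exponent: "1 \<le> real (t * n) / real (2 * t - 1)" using assms by simp
  show ?thesis
  proof (intro exI[of _ "c / 4"] conjI exI[of _ "nat \<lceil>2 / c\<rceil>"] allI impI)
    fix q assume "nat \<lceil>2 / c\<rceil> \<le> q"
    then have "2 \<le> c * real q" using \<open>0 < c\<close> by (simp add: field_simps)
    also have "\<dots> \<le> c * real q powr (real (t * n) / real (2 * t - 1))"
      using powr_mono[OF exponent, of "real q"] \<open>0 < c\<close> calculation by (cases "q = 0") auto
    finally show "\<exists>C. is_MIPPC t n q C \<and> c / 4 * real q powr (real (t * n) / real (2 * t - 1)) \<le> real (card C)"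
      using exists_large_MIPPC[OF _ _ \<open>0 < c\<close> c[unfolded K_def]] assms by auto
  qed (use \<open>0 < c\<close> in simp)
qed

end
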